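(* Let $\Phi:[a,b]\to\mathbb{R}$ be continuous and nowhere zero, let $a\le x_0\le b$, and suppose that $f(x),\mathcal Y_0(x_0,x),\mathcal Y_1(x_0,x),\dots,\mathcal Y_n(x_0,x)$ are real-valued functions of class $C^{n+1}$ on $[a,b]$. Then for $x\in[a,b]$ $$f(x)=\sum_{k=0}^n\frac{\mathcal D_kf(x_0)}{k!}\,\mathcal Y_k(x_0,x)+R_n(x),$$ where $\mathcal D_kf=\widetilde D^{(k)}f$ for $k$ odd, $\mathcal D_kf=D^{(k)}f$ for $k$ even, and $$R_n(x)=\frac{1}{n!}\int_{x_0}^x\big[\Phi(\xi)\big]^{(-1)^n}\,\mathcal Y_n(\xi,x)\,\mathcal D_{n+1}f(\xi)\,d\xi.$$
   Context: For $s,x\in[a,b]$ the $\Phi$-power functions are defined recursively by $X^{(0)}(s,x)\equiv 1$, $\widetilde X^{(0)}(s,x)\equiv 1$ and, for $n\ge 1$, $$X^{(n)}(s,x)=n\int_{s}^x X^{(n-1)}(s,\xi)\,\big(\Phi(\xi)\big)^{(-1)^n}\,d\xi,\qquad \widetilde X^{(n)}(s,x)=n\int_{s}^x \widetilde X^{(n-1)}(s,\xi)\,\Big(\frac{1}{\Phi(\xi)}\Big)^{(-1)^n}\,d\xi.$$ For $n\ge0$, $\mathcal Y_n=\widetilde X^{(n)}$ if $n$ is odd and $\mathcal Y_n=X^{(n)}$ if $n$ is even. The $\Phi$-derivatives are $Dh=\Phi\,h'$, $\widetilde Dh=\frac1\Phi h'$, with $D^{(0)}h=\widetilde D^{(0)}h=h$,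 $D^{(k)}h=D(\widetilde D^{(k-1)}h)$, $\widetilde D^{(k)}h=\widetilde D(D^{(k-1)}h)$ for $k\ge1$. In this part of the paper $\Phi$ is assumed real-valued. *)

theory Defs
  imports "HOL-Analysis.Analysis"
begin

definition oint :: "real \<Rightarrow> real \<Rightarrow> (real \<Rightarrow> real) \<Rightarrow> real" where
  "oint s x g = (if s \<le> x then integral {s..x} g else - integral {x..s} g)"

text \<open>Class C^k on a set S (for S = {a..b}: one-sided derivatives at the endpoints).\<close>
definition C_on :: "nat \<Rightarrow> real set \<Rightarrow> (real \<Rightarrow> real) \<Rightarrow> bool" where
  "C_on k S f \<longleftrightarrow> (\<exists>g :: nat \<Rightarrow> real \<Rightarrow> real. g 0 = f \<and>
      (\<forall>j\<le>k. continuous_on S (g j)) \<and>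
      (\<forall>j<k. \<forall>x\<in>S. (g j has_vector_derivative g (Suc j) x) (at x within S)))"

text \<open>Phi-power functions X^(n)(s,x) and tilde-X^(n)(s,x).
  The exponent (-1)^n: Phi^((-1)^n) is Phi for n even and 1/Phi for n odd.\<close>
fun PX :: "(real \<Rightarrow> real) \<Rightarrow> nat \<Rightarrow> real \<Rightarrow> real \<Rightarrow> real" where
  "PX \<Phi> 0 s x = 1"
| "PX \<Phi> (Suc n) s x = real (Suc n) *
     oint s x (\<lambda>\<xi>. PX \<Phi> n s \<xi> * (if even (Suc n) then \<Phi> \<xi> else 1 / \<Phi> \<xi>))"

fun PXt :: "(real \<Rightarrow> real) \<Rightarrow> nat \<Rightarrow> real \<Rightarrow> real \<Rightarrow> real" where
  "PXt \<Phi> 0 s x = 1"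
| "PXt \<Phi> (Suc n) s x = real (Suc n) *
     oint s x (\<lambda>\<xi>. PXt \<Phi> n s \<xi> * (if even (Suc n) then 1 / \<Phi> \<xi> else \<Phi> \<xi>))"

definition PY :: "(real \<Rightarrow> real) \<Rightarrow> nat \<Rightarrow> real \<Rightarrow> real \<Rightarrow> real" where
  "PY \<Phi> n = (if odd n then PXt \<Phi> n else PX \<Phi> n)"

definition phiD :: "(real \<Rightarrow> real) \<Rightarrow> real \<Rightarrow> real \<Rightarrow> (real \<Rightarrow> real) \<Rightarrow> real \<Rightarrow> real" where
  "phiD \<Phi> a b h = (\<lambda>x. \<Phi> x * vector_derivative h (at x within {a..b}))"

definition phiDt :: "(real \<Rightarrow> real) \<Rightarrow> real \<Rightarrow> real \<Rightarrow> (real \<Rightarrow> real) \<Rightarrow> real \<Rightarrow> real" where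
  "phiDt \<Phi> a b h = (\<lambda>x. vector_derivative h (at x within {a..b}) / \<Phi> x)"

fun PD :: "(real \<Rightarrow> real) \<Rightarrow> real \<Rightarrow> real \<Rightarrow> nat \<Rightarrow> (real \<Rightarrow> real) \<Rightarrow> real \<Rightarrow> real"
and PDt :: "(real \<Rightarrow> real) \<Rightarrow> real \<Rightarrow> real \<Rightarrow> nat \<Rightarrow> (real \<Rightarrow> real) \<Rightarrow> real \<Rightarrow> real" where
  "PD \<Phi> a b 0 h = h"
| "PD \<Phi> a b (Suc k) h = phiD \<Phi> a b (PDt \<Phi> a b k h)"
| "PDt \<Phi> a b 0 h = h"
| "PDt \<Phi> a b (Suc k) h = phiDt \<Phi> a b (PD \<Phi> a b k h)"

definition PDk :: "(real \<Rightarrow> real) \<Rightarrow> real \<Rightarrow> real \<Rightarrow> nat \<Rightarrow> (real \<Rightarrow> real) \<Rightarrow> real \<Rightarrow> real" where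
  "PDk \<Phi> a b k = (if odd k then PDt \<Phi> a b k else PD \<Phi> a b k)"

end

theory Submission
  imports Defs
begin

text \<open>Write u_j = \<Phi>^((-1)^j). The calligraphic derivatives satisfy (D_k f)' = u_k * D_(k+1) f,
  and Y_k(s, x) / k! is the iterated integral of u_0, ..., u_(k-1) over a simplex from s to x,
  with u_(k-1) attached to the variable next to s. Hence the derivative of Y_(k+1)(s, x) / (k+1)!
  in the lower limit s is - u_k(s) Y_k(s, x) / k!, and integrating the remainder R_n by parts
  against this kernel gives R_(n-1) = D_n f(x_0) Y_n(x_0, x) / n! + R_n; together with
  R_0 = f x - f x_0 this is the formula. The real work is the lower-limit derivative: the recursion
  defining Y_k integrates out the variable next to x, so the order of integration over the simplex
  has to be exchanged.\<close>

section \<open>Oriented integrals\<close>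

lemma oint_eq_integral_diff:
  assumes g: "continuous_on {a..b} g" and s: "s \<in> {a..b}" and x: "x \<in> {a..b}"
  shows "oint s x g = integral {a..x} g - integral {a..s} g"
proof -
  have "integral {a..u} g + integral {u..v} g = integral {a..v} g"
    if "u \<in> {a..b}" "v \<in> {a..b}" "u \<le> v" for u v
    using that by (intro Henstock_Kurzweil_Integration.integral_combine
        integrable_continuous_interval continuous_on_subset[OF g]) auto
  then show ?thesis
    using s x by (cases "s \<le> x") (force simp: oint_def)+
qed

lemma oint_refl [simp]: "oint s s g = 0"
  by (simp add: oint_def)

lemma oint_cmult: "oint s x (\<lambda>t. c * g t) = c * oint s x g"
  by (simp add: oint_def)

lemma oint_cong:
  assumes "s \<in> {a..b}" "x \<in> {a..b}" "\<And>t. t \<in> {a..b} \<Longrightarrow> g t = h t"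
  shows "oint s x g = oint s x h"
  using assms by (auto simp: oint_def intro!: integral_cong)

lemma oint_split:
  assumes "continuous_on {a..b} g" "s \<in> {a..b}" "c \<in> {a..b}" "x \<in> {a..b}"
  shows "oint s x g = oint s c g + oint c x g"
  using assms by (simp add: oint_eq_integral_diff[of a b])

lemma oint_diff:
  assumes "continuous_on {a..b} g" "continuous_on {a..b} h" "s \<in> {a..b}" "x \<in> {a..b}"
  shows "oint s x (\<lambda>t. g t - h t) = oint s x g - oint s x h"
  using assms by (simp add: oint_eq_integral_diff[of a b] continuous_on_diff integral_diff
      integrable_continuous_interval continuous_on_subset)

lemma oint_sum:
  assumes "finite I" "\<And>i. i \<in> I \<Longrightarrow> continuous_on {a..b} (g i)" "s \<in> {a..b}" "x \<in> {a..b}"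
  shows "oint s x (\<lambda>t. \<Sum>i\<in>I. g i t) = (\<Sum>i\<in>I. oint s x (g i))"
proof -
  have "integral {a..y} (\<lambda>t. \<Sum>i\<in>I. g i t) = (\<Sum>i\<in>I. integral {a..y} (g i))" if "y \<in> {a..b}" for y
    using assms(1) that
    by (intro integral_sum integrable_continuous_interval continuous_on_subset[OF assms(2)]) auto
  then show ?thesis
    using assms by (simp add: oint_eq_integral_diff[of a b] continuous_on_sum sum_subtractf)
qed

lemma has_field_derivative_oint_upper:
  assumes "continuous_on {a..b} g" "s \<in> {a..b}" "x \<in> {a..b}"
  shows "((\<lambda>y. oint s y g) has_field_derivative g x) (at x within {a..b})"
proof -
  have "((\<lambda>y. integral {a..y} g - integral {a..s} g) has_field_derivative g x) (at x within {a..b})"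
    using integral_has_real_derivative[OF assms(1,3)] by (auto intro!: derivative_eq_intros)
  then show ?thesis
    by (rule has_field_derivative_transform_within[where d=1])
      (use assms oint_eq_integral_diff[OF assms(1,2)] in auto)
qed

lemma has_field_derivative_oint_lower:
  assumes "continuous_on {a..b} g" "s \<in> {a..b}" "x \<in> {a..b}"
  shows "((\<lambda>y. oint y x g) has_field_derivative - g s) (at s within {a..b})"
proof -
  have "((\<lambda>y. integral {a..x} g - integral {a..y} g) has_field_derivative - g s) (at s within {a..b})"
    using integral_has_real_derivative[OF assms(1,2)] by (auto intro!: derivative_eq_intros)
  then show ?thesis
    by (rule has_field_derivative_transform_within[where d=1])
      (use assms oint_eq_integral_diff[OF assms(1) _ assms(3)] in auto)
qed

lemma continuous_on_oint_upper:
  assumes "continuous_on {a..b} g" "s \<in> {a..b}"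
  shows "continuous_on {a..b} (\<lambda>y. oint s y g)"
  using has_field_derivative_oint_upper[OF assms] by (rule DERIV_continuous_on)

lemma continuous_on_oint_lower:
  assumes "continuous_on {a..b} g" "x \<in> {a..b}"
  shows "continuous_on {a..b} (\<lambda>y. oint y x g)"
  using has_field_derivative_oint_lower[OF assms(1) _ assms(2)] by (rule DERIV_continuous_on)

lemma oint_fundamental_theorem:
  assumes "\<And>y. y \<in> {a..b} \<Longrightarrow> (G has_field_derivative g y) (at y within {a..b})"
    and "s \<in> {a..b}" "x \<in> {a..b}"
  shows "oint s x g = G x - G s"
proof -
  have "(g has_integral G v - G u) {u..v}" if "u \<in> {a..b}" "v \<in> {a..b}" "u \<le> v" for u v
    using that
    by (intro fundamental_theorem_of_calculus)
      (auto simp: has_real_derivative_iff_has_vector_derivative[symmetric]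
        intro!: has_field_derivative_subset[OF assms(1)])
  then show ?thesis
    using assms(2,3) by (cases "s \<le> x") (force simp: oint_def integral_unique)+
qed

lemma oint_mult_oint_swap:
  assumes f: "continuous_on {a..b} f" and g: "continuous_on {a..b} g"
    and x0: "x0 \<in> {a..b}" and x: "x \<in> {a..b}"
  shows "oint x0 x (\<lambda>t. f t * oint x0 t g) = oint x0 x (\<lambda>\<xi>. g \<xi> * oint \<xi> x f)"
proof -
  define F where "F t = oint x0 t f" for t
  define G where "G t = oint x0 t g" for t
  have F: "continuous_on {a..b} F" and G: "continuous_on {a..b} G"
    unfolding F_def G_def using f g x0 by (auto intro: continuous_on_oint_upper)
  have "oint x0 x (\<lambda>t. f t * G t + g t * F t) = F x * G x - F x0 * G x0"
    unfolding F_def G_def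
    by (rule oint_fundamental_theorem[OF _ x0 x])
      (auto intro!: derivative_eq_intros has_field_derivative_oint_upper f g x0)
  then have by_parts: "oint x0 x (\<lambda>t. f t * G t) = F x * G x - oint x0 x (\<lambda>t. g t * F t)"
    using oint_diff[of a b "\<lambda>t. f t * G t + g t * F t" "\<lambda>t. g t * F t", OF _ _ x0 x] f g F G
    by (simp add: F_def continuous_on_add continuous_on_mult)
  have "oint x0 x (\<lambda>\<xi>. g \<xi> * oint \<xi> x f) = oint x0 x (\<lambda>\<xi>. F x * g \<xi> - g \<xi> * F \<xi>)"
    using oint_split[OF f x0 _ x] by (intro oint_cong[OF x0 x]) (simp add: F_def algebra_simps)
  also have "\<dots> = F x * G x - oint x0 x (\<lambda>t. g t * F t)"
    using f g F G by (simp add: oint_diff[OF _ _ x0 x] continuous_on_mult oint_cmult G_def)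
  finally show ?thesis
    using by_parts by (simp add: G_def)
qed

lemma oint_swap_separable:
  assumes "finite I"
    and A: "\<And>i. i \<in> I \<Longrightarrow> continuous_on {a..b} (A i)"
    and B: "\<And>i. i \<in> I \<Longrightarrow> continuous_on {a..b} (B i)"
    and f: "continuous_on {a..b} f" and g: "continuous_on {a..b} g"
    and K: "\<And>\<xi> t. \<xi> \<in> {a..b} \<Longrightarrow> t \<in> {a..b} \<Longrightarrow> K \<xi> t = (\<Sum>i\<in>I. A i \<xi> * B i t)"
    and x0: "x0 \<in> {a..b}" and x: "x \<in> {a..b}"
  shows "oint x0 x (\<lambda>t. f t * oint x0 t (\<lambda>\<xi>. g \<xi> * K \<xi> t))
       = oint x0 x (\<lambda>\<xi>. g \<xi> * oint \<xi> x (\<lambda>t. f t * K \<xi> t))"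
proof -
  have gA: "continuous_on {a..b} (\<lambda>\<xi>. g \<xi> * A i \<xi>)"
    and fB: "continuous_on {a..b} (\<lambda>t. f t * B i t)" if "i \<in> I" for i
    using that A B f g by (auto intro: continuous_on_mult)
  have "oint x0 x (\<lambda>t. f t * oint x0 t (\<lambda>\<xi>. g \<xi> * K \<xi> t))
      = oint x0 x (\<lambda>t. \<Sum>i\<in>I. f t * B i t * oint x0 t (\<lambda>\<xi>. g \<xi> * A i \<xi>))"
  proof (rule oint_cong[OF x0 x])
    fix t assume t: "t \<in> {a..b}"
    have "oint x0 t (\<lambda>\<xi>. g \<xi> * K \<xi> t) = oint x0 t (\<lambda>\<xi>. \<Sum>i\<in>I. B i t * (g \<xi> * A i \<xi>))"
      using K t by (intro oint_cong[OF x0 t]) (simp add: sum_distrib_left mult_ac)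
    also have "\<dots> = (\<Sum>i\<in>I. B i t * oint x0 t (\<lambda>\<xi>. g \<xi> * A i \<xi>))"
      using assms(1) gA x0 t by (subst oint_sum) (auto intro: continuous_on_mult simp: oint_cmult)
    finally show "f t * oint x0 t (\<lambda>\<xi>. g \<xi> * K \<xi> t)
        = (\<Sum>i\<in>I. f t * B i t * oint x0 t (\<lambda>\<xi>. g \<xi> * A i \<xi>))"
      by (simp add: sum_distrib_left mult_ac)
  qed
  also have "\<dots> = (\<Sum>i\<in>I. oint x0 x (\<lambda>t. f t * B i t * oint x0 t (\<lambda>\<xi>. g \<xi> * A i \<xi>)))"
    using assms(1) A B f g x0 x
    by (intro oint_sum) (auto intro!: continuous_on_mult continuous_on_oint_upper)
  also have "\<dots> = (\<Sum>i\<in>I. oint x0 x (\<lambda>\<xi>. g \<xi> * A i \<xi> * oint \<xi> x (\<lambda>t. f t * B i t)))"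
    using oint_mult_oint_swap[OF fB gA x0 x] by simp
  also have "\<dots> = oint x0 x (\<lambda>\<xi>. \<Sum>i\<in>I. g \<xi> * A i \<xi> * oint \<xi> x (\<lambda>t. f t * B i t))"
    using assms(1) A B f g x0 x
    by (intro oint_sum[symmetric]) (auto intro!: continuous_on_mult continuous_on_oint_lower)
  also have "\<dots> = oint x0 x (\<lambda>\<xi>. g \<xi> * oint \<xi> x (\<lambda>t. f t * K \<xi> t))"
  proof (rule oint_cong[OF x0 x])
    fix \<xi> assume \<xi>: "\<xi> \<in> {a..b}"
    have "oint \<xi> x (\<lambda>t. f t * K \<xi> t) = oint \<xi> x (\<lambda>t. \<Sum>i\<in>I. A i \<xi> * (f t * B i t))"
      using K \<xi> by (intro oint_cong[OF \<xi> x]) (simp add: sum_distrib_left mult_ac)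
    also have "\<dots> = (\<Sum>i\<in>I. A i \<xi> * oint \<xi> x (\<lambda>t. f t * B i t))"
      using assms(1) fB \<xi> x by (subst oint_sum) (auto intro: continuous_on_mult simp: oint_cmult)
    finally show "(\<Sum>i\<in>I. g \<xi> * A i \<xi> * oint \<xi> x (\<lambda>t. f t * B i t))
        = g \<xi> * oint \<xi> x (\<lambda>t. f t * K \<xi> t)"
      by (simp add: sum_distrib_left mult_ac)
  qed
  finally show ?thesis .
qed

section \<open>Iterated integrals over a simplex\<close>

text \<open>iterated_oint W n s x is the integral of W 0 t_0 * ... * W (n - 1) t_(n-1) over the simplex
  s \<le> t_0 \<le> ... \<le> t_(n-1) \<le> x; the recursion integrates out the outermost variable.\<close>
fun iterated_oint :: "(nat \<Rightarrow> real \<Rightarrow> real) \<Rightarrow> nat \<Rightarrow> real \<Rightarrow> real \<Rightarrow> real" where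
  "iterated_oint W 0 s x = 1"
| "iterated_oint W (Suc n) s x = oint s x (\<lambda>t. iterated_oint W n s t * W n t)"

lemma iterated_oint_cong:
  "(\<And>j. j < n \<Longrightarrow> W j = W' j) \<Longrightarrow> iterated_oint W n s x = iterated_oint W' n s x"
  by (induction n arbitrary: x) simp_all

lemma continuous_on_iterated_oint:
  assumes W: "\<And>j. continuous_on {a..b} (W j)" and s: "s \<in> {a..b}"
  shows "continuous_on {a..b} (iterated_oint W n s)"
proof (induction n)
  case (Suc n)
  have "continuous_on {a..b} (\<lambda>x. oint s x (\<lambda>t. iterated_oint W n s t * W n t))"
    using Suc W s by (intro continuous_on_oint_upper continuous_on_mult)
  then show ?case by simp
qed simp

lemma iterated_oint_chen:
  assumes W: "\<And>j. continuous_on {a..b} (W j)"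
    and s: "s \<in> {a..b}" and c: "c \<in> {a..b}" and x: "x \<in> {a..b}"
  shows "iterated_oint W n s x
       = (\<Sum>k\<le>n. iterated_oint W k s c * iterated_oint (\<lambda>j. W (j + k)) (n - k) c x)"
  using x
proof (induction n arbitrary: x)
  case (Suc n)
  define F where "F = (\<lambda>t. iterated_oint W n s t * W n t)"
  have F: "continuous_on {a..b} F"
    unfolding F_def using continuous_on_iterated_oint[of a b W, OF W s] W
    by (intro continuous_on_mult)
  have "iterated_oint W (Suc n) s x = iterated_oint W (Suc n) s c + oint c x F"
    using oint_split[OF F s c Suc.prems] by (simp add: F_def)
  also have "oint c x F = oint c x (\<lambda>t. \<Sum>k\<le>n. iterated_oint W k s c *
      (iterated_oint (\<lambda>j. W (j + k)) (n - k) c t * W n t))"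
    using Suc.IH by (intro oint_cong[OF c Suc.prems]) (simp add: F_def sum_distrib_right mult.assoc)
  also have "\<dots> = (\<Sum>k\<le>n. iterated_oint W k s c * iterated_oint (\<lambda>j. W (j + k)) (Suc n - k) c x)"
    using c Suc.prems W
    by (subst oint_sum)
      (auto simp: oint_cmult Suc_diff_le intro!: continuous_on_mult continuous_on_iterated_oint)
  finally show ?case by (simp add: add.commute)
qed simp

text \<open>Chen's identity at x = s, where the left-hand side vanishes, expresses iterated_oint W n s c
  through terms of lower order in s.\<close>
lemma continuous_on_iterated_oint_lower:
  assumes W: "\<And>j. continuous_on {a..b} (W j)" and x: "x \<in> {a..b}"
  shows "continuous_on {a..b} (\<lambda>s. iterated_oint W n s x)"
proof (induction n rule: less_induct)
  case (less n)
  show ?case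
  proof (cases n)
    case (Suc m)
    let ?V = "\<lambda>k. iterated_oint (\<lambda>j. W (j + k)) (n - k) x"
    have "continuous_on {a..b} (\<lambda>s. - (\<Sum>k\<le>m. iterated_oint W k s x * ?V k s))"
      using Suc W x
      by (intro continuous_on_minus continuous_on_sum continuous_on_mult less.IH
          continuous_on_iterated_oint) auto
    moreover have "- (\<Sum>k\<le>m. iterated_oint W k s x * ?V k s) = iterated_oint W n s x"
      if s: "s \<in> {a..b}" for s
    proof -
      have "0 = iterated_oint W n s s" by (simp add: Suc)
      also have "\<dots> = (\<Sum>k\<le>n. iterated_oint W k s x * ?V k s)"
        by (rule iterated_oint_chen[of a b W, OF W s x s])
      also have "\<dots> = (\<Sum>k\<le>m. iterated_oint W k s x * ?V k s) + iterated_oint W n s x"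
        by (simp add: Suc)
      finally show ?thesis by linarith
    qed
    ultimately show ?thesis
      by (rule continuous_on_eq)
  qed simp
qed

text \<open>Fubini on the simplex, integrating out the innermost variable instead; the exchange of
  integrations is legitimate because Chen's identity makes the kernel separable.\<close>
lemma iterated_oint_Suc_lower:
  assumes W: "\<And>j. continuous_on {a..b} (W j)" and s: "s \<in> {a..b}" and x: "x \<in> {a..b}"
  shows "iterated_oint W (Suc n) s x = oint s x (\<lambda>t. W 0 t * iterated_oint (\<lambda>j. W (Suc j)) n t x)"
  using x
proof (induction n arbitrary: x)
  case (Suc n)
  define W' where "W' = (\<lambda>j. W (Suc j))"
  have W': "continuous_on {a..b} (W' j)" for j
    using W by (simp add: W'_def)
  have "iterated_oint W (Suc (Suc n)) s x = oint s x (\<lambda>t. iterated_oint W (Suc n) s t * W (Suc n) t)"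
    by simp
  also have "\<dots> = oint s x (\<lambda>t. W (Suc n) t * oint s t (\<lambda>\<xi>. W 0 \<xi> * iterated_oint W' n \<xi> t))"
    using Suc.IH by (intro oint_cong[OF s Suc.prems]) (simp add: W'_def mult.commute)
  also have "\<dots> = oint s x (\<lambda>\<xi>. W 0 \<xi> * oint \<xi> x (\<lambda>t. W (Suc n) t * iterated_oint W' n \<xi> t))"
    using W W' s Suc.prems iterated_oint_chen[of a b W', OF W' _ s]
    by (intro oint_swap_separable[where I = "{..n}" and A = "\<lambda>k \<xi>. iterated_oint W' k \<xi> s"
          and B = "\<lambda>k. iterated_oint (\<lambda>j. W' (j + k)) (n - k) s"])
      (simp_all add: continuous_on_iterated_oint continuous_on_iterated_oint_lower)
  also have "\<dots> = oint s x (\<lambda>\<xi>. W 0 \<xi> * iterated_oint W' (Suc n) \<xi> x)"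
    by (simp add: W'_def mult.commute)
  finally show ?case by (simp add: W'_def)
qed simp

lemma has_field_derivative_iterated_oint_lower:
  assumes W: "\<And>j. continuous_on {a..b} (W j)" and s: "s \<in> {a..b}" and x: "x \<in> {a..b}"
  shows "((\<lambda>s. iterated_oint W (Suc n) s x) has_field_derivative
      - (W 0 s * iterated_oint (\<lambda>j. W (Suc j)) n s x)) (at s within {a..b})"
proof -
  have "continuous_on {a..b} (\<lambda>t. W 0 t * iterated_oint (\<lambda>j. W (Suc j)) n t x)"
    using W x by (intro continuous_on_mult continuous_on_iterated_oint_lower)
  from has_field_derivative_oint_lower[OF this s x] show ?thesis
    by (rule has_field_derivative_transform_within[where d=1])
      (use s iterated_oint_Suc_lower[of a b W, OF W _ x] in auto)
qed

lemma taylor_formula_kernel: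
  fixes u g :: "nat \<Rightarrow> real \<Rightarrow> real" and K :: "nat \<Rightarrow> real \<Rightarrow> real \<Rightarrow> real"
  assumes x0: "x0 \<in> {a..b}" and x: "x \<in> {a..b}"
    and K_0: "\<And>s. K 0 s x = 1"
    and K_diag: "\<And>k. K (Suc k) x x = 0"
    and K_deriv: "\<And>k s. k < n \<Longrightarrow> s \<in> {a..b} \<Longrightarrow>
      ((\<lambda>s. K (Suc k) s x) has_field_derivative - (u k s * K k s x)) (at s within {a..b})"
    and u: "\<And>k. k \<le> n \<Longrightarrow> continuous_on {a..b} (u k)"
    and g_deriv: "\<And>k s. k \<le> n \<Longrightarrow> s \<in> {a..b} \<Longrightarrow>
      (g k has_field_derivative u k s * g (Suc k) s) (at s within {a..b})"
    and g_cont: "continuous_on {a..b} (g (Suc n))"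
  shows "g 0 x = (\<Sum>k\<le>n. g k x0 * K k x0 x) + oint x0 x (\<lambda>\<xi>. u n \<xi> * K n \<xi> x * g (Suc n) \<xi>)"
  using K_deriv u g_deriv g_cont
proof (induction n)
  case 0
  have "oint x0 x (\<lambda>\<xi>. u 0 \<xi> * g 1 \<xi>) = g 0 x - g 0 x0"
    using "0.prems"(3) by (intro oint_fundamental_theorem[OF _ x0 x]) auto
  then show ?case by (simp add: K_0)
next
  case (Suc n)
  define R where "R m = oint x0 x (\<lambda>\<xi>. u m \<xi> * K m \<xi> x * g (Suc m) \<xi>)" for m
  have K_cont: "continuous_on {a..b} (\<lambda>s. K k s x)" if "k \<le> Suc n" for k
  proof (cases k)
    case (Suc j)
    with that Suc.prems(1)[of j] show ?thesis by (intro DERIV_continuous_on) auto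
  qed (simp add: K_0)
  have g_cont': "continuous_on {a..b} (g k)" if "k \<le> Suc (Suc n)" for k
  proof (cases "k = Suc (Suc n)")
    case False
    with that Suc.prems(3)[of k] show ?thesis by (intro DERIV_continuous_on) auto
  qed (use Suc.prems(4) in simp)
  have "g 0 x = (\<Sum>k\<le>n. g k x0 * K k x0 x) + R n"
    unfolding R_def using Suc.prems g_cont' by (intro Suc.IH) auto
  also have "R n = g (Suc n) x0 * K (Suc n) x0 x + R (Suc n)"
  proof -
    have "oint x0 x (\<lambda>\<xi>. u (Suc n) \<xi> * K (Suc n) \<xi> x * g (Suc (Suc n)) \<xi>
        - u n \<xi> * K n \<xi> x * g (Suc n) \<xi>) = K (Suc n) x x * g (Suc n) x - K (Suc n) x0 x * g (Suc n) x0"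
      using Suc.prems(1,3)
      by (intro oint_fundamental_theorem[OF _ x0 x]) (auto intro!: derivative_eq_intros)
    moreover have "oint x0 x (\<lambda>\<xi>. u (Suc n) \<xi> * K (Suc n) \<xi> x * g (Suc (Suc n)) \<xi>
        - u n \<xi> * K n \<xi> x * g (Suc n) \<xi>) = R (Suc n) - R n"
      unfolding R_def using Suc.prems(2) K_cont g_cont'
      by (intro oint_diff[OF _ _ x0 x] continuous_on_mult) auto
    ultimately show ?thesis by (simp add: K_diag algebra_simps)
  qed
  finally show ?case by (simp add: R_def)
qed

section \<open>Smoothness classes\<close>

lemma C_on_0 [simp]: "C_on 0 S h \<longleftrightarrow> continuous_on S h"
  unfolding C_on_def by (auto intro: exI[of _ "\<lambda>_. h"])

lemma C_on_Suc:
  "C_on (Suc m) S h \<longleftrightarrow> continuous_on S h \<and>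
    (\<exists>h'. C_on m S h' \<and> (\<forall>x\<in>S. (h has_field_derivative h' x) (at x within S)))"
proof
  assume "C_on (Suc m) S h"
  then obtain g where g: "g 0 = h" "\<forall>j\<le>Suc m. continuous_on S (g j)"
    "\<forall>j<Suc m. \<forall>x\<in>S. (g j has_vector_derivative g (Suc j) x) (at x within S)"
    unfolding C_on_def by blast
  have "C_on m S (g 1)"
    unfolding C_on_def using g(2,3) by (intro exI[of _ "\<lambda>j. g (Suc j)"]) auto
  moreover have "\<forall>x\<in>S. (h has_field_derivative g 1 x) (at x within S)"
    using g(1,3) by (auto simp: has_real_derivative_iff_has_vector_derivative)
  ultimately show "continuous_on S h \<and>
      (\<exists>h'. C_on m S h' \<and> (\<forall>x\<in>S. (h has_field_derivative h' x) (at x within S)))"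
    using g(1,2) by force
next
  assume "continuous_on S h \<and>
      (\<exists>h'. C_on m S h' \<and> (\<forall>x\<in>S. (h has_field_derivative h' x) (at x within S)))"
  then obtain h' G where h: "continuous_on S h"
    and d: "\<forall>x\<in>S. (h has_field_derivative h' x) (at x within S)"
    and G: "G 0 = h'" "\<forall>j\<le>m. continuous_on S (G j)"
      "\<forall>j<m. \<forall>x\<in>S. (G j has_vector_derivative G (Suc j) x) (at x within S)"
    unfolding C_on_def by blast
  show "C_on (Suc m) S h"
    unfolding C_on_def
  proof (intro exI[of _ "case_nat h G"] conjI allI impI ballI)
    fix j assume "j \<le> Suc m"
    with h G(2) show "continuous_on S (case_nat h G j)"
      by (cases j) auto
  next
    fix j x assume "j < Suc m" "x \<in> S"
    with d G(1,3) show "(case_nat h G j has_vector_derivative case_nat h G (Suc j) x) (at x within S)"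
      by (cases j) (auto simp: has_real_derivative_iff_has_vector_derivative)
  qed simp
qed

lemma C_on_mono:
  assumes "C_on m S h" "k \<le> m"
  shows "C_on k S h"
proof -
  from assms(1) obtain g where "g 0 = h" "\<forall>j\<le>m. continuous_on S (g j)"
    "\<forall>j<m. \<forall>x\<in>S. (g j has_vector_derivative g (Suc j) x) (at x within S)"
    unfolding C_on_def by blast
  with assms(2) show ?thesis
    unfolding C_on_def by (intro exI[of _ g]) auto
qed

lemma C_on_cong:
  assumes "C_on m S h" and eq: "\<And>x. x \<in> S \<Longrightarrow> h x = h2 x"
  shows "C_on m S h2"
proof (cases m)
  case 0
  with assms(1) have "continuous_on S h" by simp
  then show ?thesis
    using continuous_on_eq[OF _ eq] 0 by simp
next
  case (Suc k)
  obtain h' where h: "continuous_on S h" and h': "C_on k S h'"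
    and d: "\<forall>x\<in>S. (h has_field_derivative h' x) (at x within S)"
    using assms(1) unfolding Suc C_on_Suc by blast
  have "(h2 has_field_derivative h' x) (at x within S)" if "x \<in> S" for x
    using d that eq by (intro has_field_derivative_transform_within[of h "h' x" x S 1 h2]) auto
  with continuous_on_eq[OF h eq] h' show ?thesis
    unfolding Suc C_on_Suc by blast
qed

lemma C_on_const: "C_on m S (\<lambda>x. c)"
proof (induction m arbitrary: c)
  case (Suc m)
  show ?case
    unfolding C_on_Suc using Suc.IH[of 0] by (intro conjI exI[of _ "\<lambda>x. 0"]) auto
qed simp

lemma C_on_add: "C_on m S h \<Longrightarrow> C_on m S k \<Longrightarrow> C_on m S (\<lambda>x. h x + k x)"
proof (induction m arbitrary: h k)
  case (Suc m)
  obtain h' k' where h: "continuous_on S h" "C_on m S h'"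
      "\<forall>x\<in>S. (h has_field_derivative h' x) (at x within S)"
    and k: "continuous_on S k" "C_on m S k'" "\<forall>x\<in>S. (k has_field_derivative k' x) (at x within S)"
    using Suc.prems unfolding C_on_Suc by blast
  have "C_on m S (\<lambda>x. h' x + k' x)"
    using h(2) k(2) by (rule Suc.IH)
  moreover have "\<forall>x\<in>S. ((\<lambda>x. h x + k x) has_field_derivative h' x + k' x) (at x within S)"
    using h(3) k(3) by (auto intro: DERIV_add)
  ultimately show ?case
    unfolding C_on_Suc using continuous_on_add[OF h(1) k(1)] by blast
qed (simp add: continuous_on_add)

lemma C_on_mult: "C_on m S h \<Longrightarrow> C_on m S k \<Longrightarrow> C_on m S (\<lambda>x. h x * k x)"
proof (induction m arbitrary: h k)
  case (Suc m)
  obtain h' k' where h: "continuous_on S h" "C_on m S h'"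
      "\<forall>x\<in>S. (h has_field_derivative h' x) (at x within S)"
    and k: "continuous_on S k" "C_on m S k'" "\<forall>x\<in>S. (k has_field_derivative k' x) (at x within S)"
    using Suc.prems unfolding C_on_Suc by blast
  have "C_on m S h" "C_on m S k"
    using Suc.prems by (auto intro: C_on_mono)
  then have "C_on m S (\<lambda>x. h' x * k x + k' x * h x)"
    using h(2) k(2) by (intro C_on_add Suc.IH)
  moreover have "\<forall>x\<in>S. ((\<lambda>x. h x * k x) has_field_derivative h' x * k x + k' x * h x) (at x within S)"
    using h(3) k(3) by (auto intro: DERIV_mult)
  ultimately show ?case
    unfolding C_on_Suc using continuous_on_mult[OF h(1) k(1)] by blast
qed (simp add: continuous_on_mult)

lemma C_on_inverse:
  assumes "C_on m S h" and nz: "\<And>x. x \<in> S \<Longrightarrow> h x \<noteq> 0"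
  shows "C_on m S (\<lambda>x. 1 / h x)"
  using assms(1)
proof (induction m)
  case 0
  then show ?case using nz by (simp add: continuous_on_divide)
next
  case (Suc m)
  obtain h' where h: "continuous_on S h" "C_on m S h'"
      "\<forall>x\<in>S. (h has_field_derivative h' x) (at x within S)"
    using Suc.prems unfolding C_on_Suc by blast
  have "C_on m S (\<lambda>x. 1 / h x)"
    using Suc.IH C_on_mono[OF Suc.prems, of m] by simp
  then have "C_on m S (\<lambda>x. (- 1) * h' x * (1 / h x * (1 / h x)))"
    using h(2) by (intro C_on_mult C_on_const)
  moreover have "\<forall>x\<in>S. ((\<lambda>x. 1 / h x) has_field_derivative (- 1) * h' x * (1 / h x * (1 / h x))) (at x within S)"
    using h(3) nz by (auto intro!: derivative_eq_intros simp: power2_eq_square)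
  ultimately show ?case
    unfolding C_on_Suc using continuous_on_divide[OF continuous_on_const h(1)] nz by auto
qed

lemma C_on_derivative:
  assumes "a < b" "C_on (Suc m) {a..b} h"
    and "\<And>y. y \<in> {a..b} \<Longrightarrow> (h has_field_derivative h' y) (at y within {a..b})"
  shows "C_on m {a..b} h'"
proof -
  obtain h'' where h'': "C_on m {a..b} h''"
    and d: "\<forall>y\<in>{a..b}. (h has_field_derivative h'' y) (at y within {a..b})"
    using assms(2) unfolding C_on_Suc by blast
  have "h'' y = h' y" if "y \<in> {a..b}" for y
    using vector_derivative_unique_within_closed_interval[of a b y h] assms(1,3) d that
    by (simp add: has_real_derivative_iff_has_vector_derivative)
  then show ?thesis
    by (rule C_on_cong[OF h''])
qed

section \<open>\<Phi>-derivatives and \<Phi>-power functions\<close>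

definition phi_weight :: "(real \<Rightarrow> real) \<Rightarrow> nat \<Rightarrow> real \<Rightarrow> real" where
  "phi_weight \<Phi> j x = (if even j then \<Phi> x else 1 / \<Phi> x)"

lemma phi_weight_nonzero: "\<Phi> x \<noteq> 0 \<Longrightarrow> phi_weight \<Phi> j x \<noteq> 0"
  by (simp add: phi_weight_def)

lemma C_on_phi_weight:
  "C_on n S \<Phi> \<Longrightarrow> \<forall>x\<in>S. \<Phi> x \<noteq> 0 \<Longrightarrow> C_on n S (phi_weight \<Phi> j)"
  unfolding phi_weight_def by (cases "even j") (simp_all add: C_on_inverse)

lemma PX_eq_iterated_oint:
  "PX \<Phi> m s x = fact m * iterated_oint (\<lambda>j. phi_weight \<Phi> (Suc j)) m s x"
proof (induction m arbitrary: x)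
  case (Suc m)
  have w: "(if even (Suc m) then \<Phi> \<xi> else 1 / \<Phi> \<xi>) = phi_weight \<Phi> (Suc m) \<xi>" for \<xi>
    by (simp add: phi_weight_def)
  have "(\<lambda>\<xi>. PX \<Phi> m s \<xi> * (if even (Suc m) then \<Phi> \<xi> else 1 / \<Phi> \<xi>))
      = (\<lambda>\<xi>. fact m * (iterated_oint (\<lambda>j. phi_weight \<Phi> (Suc j)) m s \<xi> * phi_weight \<Phi> (Suc m) \<xi>))"
    unfolding w Suc.IH by (simp add: mult.assoc)
  then show ?case by (simp add: oint_cmult)
qed simp

lemma PXt_eq_iterated_oint:
  "PXt \<Phi> m s x = fact m * iterated_oint (phi_weight \<Phi>) m s x"
proof (induction m arbitrary: x)
  case (Suc m)
  have w: "(if even (Suc m) then 1 / \<Phi> \<xi> else \<Phi> \<xi>) = phi_weight \<Phi> m \<xi>" for \<xi>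
    by (simp add: phi_weight_def)
  have "(\<lambda>\<xi>. PXt \<Phi> m s \<xi> * (if even (Suc m) then 1 / \<Phi> \<xi> else \<Phi> \<xi>))
      = (\<lambda>\<xi>. fact m * (iterated_oint (phi_weight \<Phi>) m s \<xi> * phi_weight \<Phi> m \<xi>))"
    unfolding w Suc.IH by (simp add: mult.assoc)
  then show ?case by (simp add: oint_cmult)
qed simp

text \<open>In either parity the weights of PY k appear in reversed order: the innermost integral
  carries \<Phi>^((-1)^(k-1)) and the outermost one \<Phi>.\<close>
lemma PY_eq_iterated_oint:
  "PY \<Phi> k s x = fact k * iterated_oint (\<lambda>j. phi_weight \<Phi> (k - Suc j)) k s x"
proof (cases "odd k")
  case True
  have "iterated_oint (phi_weight \<Phi>) k s x = iterated_oint (\<lambda>j. phi_weight \<Phi> (k - Suc j)) k s x"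
    by (rule iterated_oint_cong) (use True in \<open>auto simp: phi_weight_def fun_eq_iff\<close>)
  with True show ?thesis by (simp add: PY_def PXt_eq_iterated_oint)
next
  case False
  have "iterated_oint (\<lambda>j. phi_weight \<Phi> (Suc j)) k s x
      = iterated_oint (\<lambda>j. phi_weight \<Phi> (k - Suc j)) k s x"
    by (rule iterated_oint_cong) (use False in \<open>auto simp: phi_weight_def fun_eq_iff\<close>)
  with False show ?thesis by (simp add: PY_def PX_eq_iterated_oint)
qed

lemma PY_refl: "PY \<Phi> k s s = (if k = 0 then 1 else 0)"
  by (cases k) (auto simp: PY_def)

lemma PDk_0 [simp]: "PDk \<Phi> a b 0 f = f"
  by (simp add: PDk_def)

lemma PDk_Suc: "PDk \<Phi> a b (Suc k) f = phiDt (phi_weight \<Phi> k) a b (PDk \<Phi> a b k f)"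
  by (auto simp: PDk_def phiD_def phiDt_def phi_weight_def fun_eq_iff)

lemma phiDt_eq:
  assumes "a < b" "y \<in> {a..b}" "(h has_field_derivative d) (at y within {a..b})"
  shows "phiDt w a b h y = d / w y"
  using vector_derivative_within_closed_interval[of a b y h d] assms
  by (simp add: phiDt_def has_real_derivative_iff_has_vector_derivative)

context
  fixes \<Phi> f :: "real \<Rightarrow> real" and a b :: real and n :: nat
  assumes ab: "a < b" and \<Phi>: "C_on n {a..b} \<Phi>" and nz: "\<forall>x\<in>{a..b}. \<Phi> x \<noteq> 0"
    and f: "C_on (Suc n) {a..b} f"
begin

lemma C_on_PDk: "k \<le> Suc n \<Longrightarrow> C_on (Suc n - k) {a..b} (PDk \<Phi> a b k f)"
proof (induction k)
  case (Suc k)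
  then have "C_on (Suc (n - k)) {a..b} (PDk \<Phi> a b k f)"
    by (simp add: Suc_diff_le)
  then obtain h' where h': "C_on (n - k) {a..b} h'"
    and d: "\<forall>y\<in>{a..b}. (PDk \<Phi> a b k f has_field_derivative h' y) (at y within {a..b})"
    unfolding C_on_Suc by blast
  have "C_on (n - k) {a..b} (\<lambda>y. h' y * (1 / phi_weight \<Phi> k y))"
    using h' C_on_mono[OF C_on_phi_weight[OF \<Phi> nz]] nz
    by (intro C_on_mult C_on_inverse phi_weight_nonzero) auto
  then have "C_on (n - k) {a..b} (PDk \<Phi> a b (Suc k) f)"
    by (rule C_on_cong) (simp add: PDk_Suc phiDt_eq[OF ab _ d[rule_format]])
  then show ?case by simp
qed (simp add: f)

lemma PDk_has_field_derivative:
  assumes "k \<le> n" "y \<in> {a..b}"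
  shows "(PDk \<Phi> a b k f has_field_derivative phi_weight \<Phi> k y * PDk \<Phi> a b (Suc k) f y)
    (at y within {a..b})"
proof -
  have "C_on (Suc (n - k)) {a..b} (PDk \<Phi> a b k f)"
    using C_on_PDk[of k] assms(1) by (simp add: Suc_diff_le)
  then obtain h' where d: "\<forall>y\<in>{a..b}. (PDk \<Phi> a b k f has_field_derivative h' y) (at y within {a..b})"
    unfolding C_on_Suc by blast
  moreover have "phi_weight \<Phi> k y \<noteq> 0"
    using nz assms(2) by (simp add: phi_weight_nonzero)
  ultimately show ?thesis
    using assms(2) by (simp add: PDk_Suc phiDt_eq[OF ab _ d[rule_format]])
qed

lemma taylor_formula_iterated_oint:
  assumes x0: "x0 \<in> {a..b}" and x: "x \<in> {a..b}"
  shows "f x = (\<Sum>k\<le>n. PDk \<Phi> a b k f x0 * iterated_oint (\<lambda>j. phi_weight \<Phi> (k - Suc j)) k x0 x)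
    + oint x0 x (\<lambda>\<xi>. phi_weight \<Phi> n \<xi> * iterated_oint (\<lambda>j. phi_weight \<Phi> (n - Suc j)) n \<xi> x
        * PDk \<Phi> a b (Suc n) f \<xi>)"
proof -
  define K where "K k s y = iterated_oint (\<lambda>j. phi_weight \<Phi> (k - Suc j)) k s y" for k s y
  have w: "continuous_on {a..b} (phi_weight \<Phi> j)" for j
    using C_on_mono[OF C_on_phi_weight[OF \<Phi> nz], of 0] by simp
  have "PDk \<Phi> a b 0 f x = (\<Sum>k\<le>n. PDk \<Phi> a b k f x0 * K k x0 x)
      + oint x0 x (\<lambda>\<xi>. phi_weight \<Phi> n \<xi> * K n \<xi> x * PDk \<Phi> a b (Suc n) f \<xi>)"
  proof (rule taylor_formula_kernel[OF x0 x, where K = K and u = "phi_weight \<Phi>"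
        and g = "\<lambda>k. PDk \<Phi> a b k f"])
    fix k s assume s: "s \<in> {a..b}"
    have "((\<lambda>s. K (Suc k) s x) has_field_derivative - (phi_weight \<Phi> (Suc k - Suc 0) s
        * iterated_oint (\<lambda>j. phi_weight \<Phi> (Suc k - Suc (Suc j))) k s x)) (at s within {a..b})"
      unfolding K_def using w by (rule has_field_derivative_iterated_oint_lower[OF _ s x])
    then show "((\<lambda>s. K (Suc k) s x) has_field_derivative - (phi_weight \<Phi> k s * K k s x))
        (at s within {a..b})"
      by (simp add: K_def)
  next
    fix k s assume "k \<le> n" "s \<in> {a..b}"
    then show "(PDk \<Phi> a b k f has_field_derivative phi_weight \<Phi> k s * PDk \<Phi> a b (Suc k) f s)
        (at s within {a..b})"
      by (rule PDk_has_field_derivative)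
  next
    show "continuous_on {a..b} (PDk \<Phi> a b (Suc n) f)"
      using C_on_PDk[of "Suc n"] by simp
  qed (simp_all add: K_def w)
  then show ?thesis
    by (simp add: K_def)
qed

end

lemma C_on_Phi_of_C_on_PY:
  assumes "a < b" "continuous_on {a..b} \<Phi>" "x0 \<in> {a..b}"
    and "\<forall>k\<le>n. C_on (Suc n) {a..b} (\<lambda>x. PY \<Phi> k x0 x)"
  shows "C_on n {a..b} \<Phi>"
proof (cases n)
  case (Suc m)
  then have "C_on (Suc n) {a..b} (\<lambda>x. oint x0 x \<Phi>)"
    using assms(4) by (auto simp: PY_def)
  then show ?thesis
    by (rule C_on_derivative[OF assms(1)]) (rule has_field_derivative_oint_upper[OF assms(2,3)])
qed (simp add: assms(2))

theorem theorem5: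
  fixes \<Phi> f :: "real \<Rightarrow> real" and a b x\<^sub>0 :: real and n :: nat
  assumes "continuous_on {a..b} \<Phi>"
    and "\<forall>x\<in>{a..b}. \<Phi> x \<noteq> 0"
    and "a \<le> x\<^sub>0" and "x\<^sub>0 \<le> b"
    and "C_on (Suc n) {a..b} f"
    and "\<forall>k\<le>n. C_on (Suc n) {a..b} (\<lambda>x. PY \<Phi> k x\<^sub>0 x)"
  shows "\<forall>x\<in>{a..b}.
    f x = (\<Sum>k\<le>n. PDk \<Phi> a b k f x\<^sub>0 / fact k * PY \<Phi> k x\<^sub>0 x)
          + 1 / fact n * oint x\<^sub>0 x (\<lambda>\<xi>. (if even n then \<Phi> \<xi> else 1 / \<Phi> \<xi>)
                 * PY \<Phi> n \<xi> x * PDk \<Phi> a b (Suc n) f \<xi>)"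
proof
  fix x assume x: "x \<in> {a..b}"
  have x0: "x\<^sub>0 \<in> {a..b}"
    using assms(3,4) by simp
  show "f x = (\<Sum>k\<le>n. PDk \<Phi> a b k f x\<^sub>0 / fact k * PY \<Phi> k x\<^sub>0 x)
          + 1 / fact n * oint x\<^sub>0 x (\<lambda>\<xi>. (if even n then \<Phi> \<xi> else 1 / \<Phi> \<xi>)
                 * PY \<Phi> n \<xi> x * PDk \<Phi> a b (Suc n) f \<xi>)"
  proof (cases "a = b")
    case True
    with x x0 have "x = x\<^sub>0" by simp
    moreover have "(\<Sum>k\<le>n. PDk \<Phi> a b k f x\<^sub>0 / fact k * PY \<Phi> k x\<^sub>0 x\<^sub>0)
        = (\<Sum>k\<le>n. if k = 0 then f x\<^sub>0 else 0)"
      by (rule sum.cong) (auto simp: PY_refl)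
    ultimately show ?thesis by simp
  next
    case False
    with assms(3,4) have ab: "a < b" by simp
    have \<Phi>: "C_on n {a..b} \<Phi>"
      using C_on_Phi_of_C_on_PY[OF ab assms(1) x0 assms(6)] .
    from taylor_formula_iterated_oint[OF ab \<Phi> assms(2,5) x0 x] show ?thesis
      by (simp add: PY_eq_iterated_oint phi_weight_def oint_cmult[symmetric] mult_ac)
  qed
qed

end
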